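(* Let $T=(V,E)$ be a temporal bipartite graph with $m=|E|$ edges, let $\tau>0$, $i\in\{1,\dots,6\}$ and $\varepsilon,\delta\in(0,1)$. Then (a) if $p\ge\frac{1}{1+\delta\varepsilon^2}$, the estimator $\widehat{C}_i$ returned by \texttt{TBC-E} or by \texttt{TBC-N} with sampling probability $p$ is an $(\varepsilon,\delta)$-estimator of $C_i$; and (b) for any $c>0$, if $s\ge\frac{(m-1)\ln(2/\delta)}{(1+\varepsilon)\ln(1+\varepsilon)-\varepsilon}$, the estimator $\widehat{C}_i$ returned by \texttt{TBC-I} with parameters $s,c$ is an $(\varepsilon,\delta)$-estimator of $C_i$. Here $\widehat{C}_i$ is an $(\varepsilon,\delta)$-estimator of $C_i$ if $\Pr[|\widehat{C}_i-C_i|\ge\varepsilon C_i]\le\delta$.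
   Context: A temporal bipartite graph $T=(V,E)$ has node set $V=U\cup L$ with $U\cap L=\emptyset$ and a finite (multi)set $E\subseteq U\times L\times\mathbb{R}^+$ of temporal edges $(u,l,t)$; $m=|E|$. A temporal butterfly $B_i$ ($i=1,\dots,6$) is the butterfly on nodes $u'_1,u'_2$ (upper side) and $l'_1,l'_2$ (lower side) with edges $(u'_1,l'_1),(u'_2,l'_1),(u'_1,l'_2),(u'_2,l'_2)$ together with an ordering $\sigma_i$ of these four edges; $\sigma_1,\dots,\sigma_6$ are the six orderings in which $(u'_1,l'_1)$ comes first. Given $\tau>0$, a set $S$ of four temporal edges $\{(u_x,l_x,t_1),(u_y,l_x,t_2),(u_x,l_y,t_3),(u_y,l_y,t_4)\}$ of $T$ with $u_x\ne u_y\in U$, $l_x\ne l_y\in L$ is a $\tau$-instance of $B_i$ if, under the map $u_x\mapsto u'_1,u_y\mapsto u'_2,l_x\mapsto l'_1,l_y\mapsto l'_2$, the order of the four edges by timestamp matches $\sigma_i$ (so $(u_x,l_x,t_1)$ has the smallest timestamp), and $\max_{j\in\{2,3,4\}}t_j-t_1\le\tau$. $C_i$ is the number of $\tau$-instances of $B_i$ in $T$; for $e\in E$, $C_i(e)$ is the number of $\tau$-instances of $B_i$ whose first (smallest-timestamp) edge is $e$. \texttt{TBC-E}: each edge $e\in E$ is put into $\widehat{E}$ independently with probability $p$; output $\widehat{C}_i=\sum_{e\in\widehat{E}}C_i(e)/p$. \texttt{TBC-N}: each node $u\in U$ (alternatively, each node of $L$) is put into $\widehat{U}$ independently with probability $p$;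 $\widehat{E}$ is the set of edges incident to $\widehat{U}$; output $\widehat{C}_i=\sum_{e\in\widehat{E}}C_i(e)/p$. \texttt{TBC-I} with parameters $s\in\mathbb{Z}_{>0}$, $c>0$: draw $s$ edges from $E$ uniformly at random and independently; for each drawn edge with timestamp $t'$, add to the multiset $\widehat{E}$ every edge of $E$ with timestamp in $[t',t'+c\tau]$; for $e=(u,l,t)$ let $m'_e$ be the number of edges of $E$ with timestamp in $[t-c\tau,t]$; output $\widehat{C}_i=\sum_{e\in\widehat{E}}\frac{m}{s\,m'_e}C_i(e)$ (counting multiplicities). *)

theory Defs
  imports "HOL-Probability.Probability"
begin

(* The (multi)set E of temporal edges is
   represented as a list; an edge is identified by its index in {..<length E},
   so repeated copies of the same triple are distinct edges. *)

definition temporal_bipartite_graph ::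
  "'v set \<Rightarrow> 'v set \<Rightarrow> ('v \<times> 'v \<times> real) list \<Rightarrow> bool" where
  "temporal_bipartite_graph U L E \<longleftrightarrow>
     finite U \<and> finite L \<and> U \<inter> L = {} \<and>
     (\<forall>x\<in>set E. fst x \<in> U \<and> fst (snd x) \<in> L \<and> snd (snd x) > 0)"

definition up_of :: "('v \<times> 'v \<times> real) list \<Rightarrow> nat \<Rightarrow> 'v" where
  "up_of E e = fst (E ! e)"
definition lo_of :: "('v \<times> 'v \<times> real) list \<Rightarrow> nat \<Rightarrow> 'v" where
  "lo_of E e = fst (snd (E ! e))"
definition ts_of :: "('v \<times> 'v \<times> real) list \<Rightarrow> nat \<Rightarrow> real" where
  "ts_of E e = snd (snd (E ! e))"

(* Roles: 1 = (u'1,l'1), 2 = (u'2,l'1), 3 = (u'1,l'2), 4 = (u'2,l'2).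
   sigma i (i = 1..6) lists the four roles in temporal order; role 1 first. *)
definition sigma :: "nat \<Rightarrow> nat list" where
  "sigma i = 1 # ([[2,3,4],[2,4,3],[3,2,4],[3,4,2],[4,2,3],[4,3,2]] ! (i - 1))"

(* (a,b,c,d) = edges (u_x,l_x,t1),(u_y,l_x,t2),(u_x,l_y,t3),(u_y,l_y,t4) *)
definition is_inst ::
  "('v \<times> 'v \<times> real) list \<Rightarrow> real \<Rightarrow> nat \<Rightarrow> nat \<Rightarrow> nat \<Rightarrow> nat \<Rightarrow> nat \<Rightarrow> bool" where
  "is_inst E \<tau> i a b c d \<longleftrightarrow>
     a < length E \<and> b < length E \<and> c < length E \<and> d < length E \<and>
     up_of E a = up_of E c \<and> up_of E b = up_of E d \<and>
     lo_of E a = lo_of E b \<and> lo_of E c = lo_of E d \<and>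
     up_of E a \<noteq> up_of E b \<and> lo_of E a \<noteq> lo_of E c \<and>
     sorted_wrt (<) (map (\<lambda>k. ts_of E ([a, b, c, d] ! (k - 1))) (sigma i)) \<and>
     max (ts_of E b) (max (ts_of E c) (ts_of E d)) - ts_of E a \<le> \<tau>"

definition instances :: "('v \<times> 'v \<times> real) list \<Rightarrow> real \<Rightarrow> nat \<Rightarrow> nat set set" where
  "instances E \<tau> i = {S. \<exists>a b c d. S = {a, b, c, d} \<and> is_inst E \<tau> i a b c d}"

definition C_count :: "('v \<times> 'v \<times> real) list \<Rightarrow> real \<Rightarrow> nat \<Rightarrow> nat" where
  "C_count E \<tau> i = card (instances E \<tau> i)"

(* C_i(e): number of instances whose first (smallest-timestamp) edge is e *)
definition C_edge :: "('v \<times> 'v \<times> real) list \<Rightarrow> real \<Rightarrow> nat \<Rightarrow> nat \<Rightarrow> nat" where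
  "C_edge E \<tau> i e = card {S. \<exists>b c d. S = {e, b, c, d} \<and> is_inst E \<tau> i e b c d}"

definition tbcE :: "('v \<times> 'v \<times> real) list \<Rightarrow> real \<Rightarrow> nat \<Rightarrow> real \<Rightarrow> real pmf" where
  "tbcE E \<tau> i p =
     map_pmf (\<lambda>f. \<Sum>e\<in>{e. e < length E \<and> f e}. real (C_edge E \<tau> i e) / p)
       (Pi_pmf {..<length E} False (\<lambda>_. bernoulli_pmf p))"

(* TBC-N: sample nodes of the side W (W = U, proj = upper endpoint; or
   W = L, proj = lower endpoint); keep the edges incident to sampled nodes *)
definition tbcN :: "'v set \<Rightarrow> (nat \<Rightarrow> 'v) \<Rightarrow> ('v \<times> 'v \<times> real) list \<Rightarrow> real \<Rightarrow> nat \<Rightarrow> real \<Rightarrow> real pmf" where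
  "tbcN W proj E \<tau> i p =
     map_pmf (\<lambda>f. \<Sum>e\<in>{e. e < length E \<and> proj e \<in> W \<and> f (proj e)}. real (C_edge E \<tau> i e) / p)
       (Pi_pmf W False (\<lambda>_. bernoulli_pmf p))"

definition tbcN_U :: "'v set \<Rightarrow> ('v \<times> 'v \<times> real) list \<Rightarrow> real \<Rightarrow> nat \<Rightarrow> real \<Rightarrow> real pmf" where
  "tbcN_U U E = tbcN U (up_of E) E"

definition tbcN_L :: "'v set \<Rightarrow> ('v \<times> 'v \<times> real) list \<Rightarrow> real \<Rightarrow> nat \<Rightarrow> real \<Rightarrow> real pmf" where
  "tbcN_L L E = tbcN L (lo_of E) E"

definition m_prime :: "('v \<times> 'v \<times> real) list \<Rightarrow> real \<Rightarrow> real \<Rightarrow> nat \<Rightarrow> nat" where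
  "m_prime E \<tau> c e = card {e'. e' < length E \<and> ts_of E e - c * \<tau> \<le> ts_of E e' \<and> ts_of E e' \<le> ts_of E e}"

(* TBC-I: s independent uniform draws d 0, ..., d (s-1) from E; the multiset
   \<widehat>E is the sum over draws of the edges in the window [t', t' + c tau] *)
definition tbcI :: "('v \<times> 'v \<times> real) list \<Rightarrow> real \<Rightarrow> nat \<Rightarrow> real \<Rightarrow> nat \<Rightarrow> real pmf" where
  "tbcI E \<tau> i c s =
     map_pmf (\<lambda>d. \<Sum>j<s. \<Sum>e\<in>{e. e < length E \<and> ts_of E (d j) \<le> ts_of E e \<and> ts_of E e \<le> ts_of E (d j) + c * \<tau>}.
                     real (length E) / (real s * real (m_prime E \<tau> c e)) * real (C_edge E \<tau> i e))
       (Pi_pmf {..<s} 0 (\<lambda>_. pmf_of_set {..<length E}))"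

definition eps_delta_estimator :: "real pmf \<Rightarrow> real \<Rightarrow> real \<Rightarrow> real \<Rightarrow> bool" where
  "eps_delta_estimator X C \<epsilon> \<delta> \<longleftrightarrow> measure_pmf.prob X {x. \<bar>x - C\<bar> \<ge> \<epsilon> * C} \<le> \<delta>"

end

theory Submission
  imports Defs
begin

(* TBC-E and TBC-N are Horvitz-Thompson estimators of C_i = (sum over e of C_i(e)) under
   independent Bernoulli(p) sampling, of edges or of nodes carrying the summed counts of their
   edges.  Their mean square error is (1 - p)/p * sum D_w^2 <= (1 - p)/p * C_i^2, so Chebyshev's
   inequality gives the bound as soon as (1 - p)/p <= delta * epsilon^2.
   TBC-I is m times the mean of s independent copies of a window weight Y with mean C_i/m and
   0 <= Y <= C_i.  The normalised variable Z = m Y / C_i - 1 is bounded by m - 1 and has variance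
   at most m - 1, so Bennett's inequality for Z and -Z bounds the failure probability by
   2 exp (- s h(epsilon) / (m - 1)) with h(u) = (1 + u) ln (1 + u) - u. *)

section \<open>Elementary inequalities for the exponential\<close>

lemma exp_upper_Taylor_quadratic_nonpos:
  fixes x :: real
  assumes "x \<le> 0"
  shows "exp x \<le> 1 + x + x\<^sup>2 / 2"
proof -
  define F where "F u = exp u * (1 - u + u\<^sup>2 / 2)" for u :: real
  have F_deriv: "(F has_real_derivative exp u * u\<^sup>2 / 2) (at u)" for u
    unfolding F_def by (auto intro!: derivative_eq_intros simp: power2_eq_square algebra_simps)
  have "F 0 \<le> F (- x)"
    by (rule DERIV_nonneg_imp_nondecreasing[of 0 "- x" F]) (use assms F_deriv in \<open>auto intro!: exI\<close>)
  then have "1 \<le> exp (- x) * (1 + x + x\<^sup>2 / 2)"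
    by (simp add: F_def)
  then have "exp x \<le> exp x * exp (- x) * (1 + x + x\<^sup>2 / 2)"
    by (simp add: mult.assoc)
  then show ?thesis
    by (simp add: exp_minus_inverse)
qed

lemma exp_remainder_div_square_mono:
  fixes x y :: real
  assumes "0 < x" "x \<le> y"
  shows "(exp x - 1 - x) / x\<^sup>2 \<le> (exp y - 1 - y) / y\<^sup>2"
proof -
  have remainder_sums: "(\<lambda>n. z ^ (n + 2) / fact (n + 2) / z\<^sup>2) sums ((exp z - 1 - z) / z\<^sup>2)" for z :: real
  proof -
    have "(\<lambda>n. z ^ n / fact n) sums exp z"
      using exp_converges[of z] by (simp add: divide_inverse mult.commute)
    then have "(\<lambda>n. z ^ Suc n / fact (Suc n)) sums (exp z - 1)"
      by (subst sums_Suc_iff) simp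
    then have "(\<lambda>n. z ^ Suc (Suc n) / fact (Suc (Suc n))) sums (exp z - 1 - z)"
      by (subst sums_Suc_iff) simp
    then show ?thesis
      by (intro sums_divide) simp
  qed
  show ?thesis
  proof (rule sums_le[OF _ remainder_sums remainder_sums])
    fix n
    have "x ^ (n + 2) / fact (n + 2) / x\<^sup>2 = x ^ n / fact (n + 2)"
      using assms by (simp add: power_add power2_eq_square)
    also have "\<dots> \<le> y ^ n / fact (n + 2)"
      using assms by (intro divide_right_mono power_mono) auto
    also have "\<dots> = y ^ (n + 2) / fact (n + 2) / y\<^sup>2"
      using assms by (simp add: power_add power2_eq_square)
    finally show "x ^ (n + 2) / fact (n + 2) / x\<^sup>2 \<le> y ^ (n + 2) / fact (n + 2) / y\<^sup>2" .
  qed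
qed

(* Equivalent to (exp x - 1 - x) / x^2 being increasing on the whole real line. *)
lemma exp_le_Bennett_quadratic:
  fixes w b l :: real
  assumes "w \<le> b" "0 < b" "0 < l"
  shows "exp (l * w) \<le> 1 + l * w + w\<^sup>2 * ((exp (l * b) - 1 - l * b) / b\<^sup>2)"
proof (cases "w \<le> 0")
  case True
  have "exp (l * w) \<le> 1 + l * w + w\<^sup>2 * (l\<^sup>2 / 2)"
    using exp_upper_Taylor_quadratic_nonpos[of "l * w"] True assms
    by (simp add: mult_nonneg_nonpos power_mult_distrib mult.commute)
  also have "l\<^sup>2 / 2 \<le> (exp (l * b) - 1 - l * b) / b\<^sup>2"
    using exp_lower_Taylor_quadratic[of "l * b"] assms
    by (simp add: field_simps power_mult_distrib)
  finally show ?thesis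
    by (simp add: mult_left_mono)
next
  case False
  then have "(exp (l * w) - 1 - l * w) / (l * w)\<^sup>2 \<le> (exp (l * b) - 1 - l * b) / (l * b)\<^sup>2"
    using assms by (intro exp_remainder_div_square_mono) (auto intro: mult_left_mono)
  then have "exp (l * w) - 1 - l * w \<le> (exp (l * b) - 1 - l * b) / (l * b)\<^sup>2 * (l * w)\<^sup>2"
    using False assms by (simp add: divide_le_eq)
  also have "\<dots> = w\<^sup>2 * ((exp (l * b) - 1 - l * b) / b\<^sup>2)"
    using assms by (simp add: power_mult_distrib)
  finally show ?thesis
    by simp
qed

definition bennett_h :: "real \<Rightarrow> real" where
  "bennett_h u = (1 + u) * ln (1 + u) - u"

lemma bennett_h_pos:
  assumes "0 < u"
  shows "0 < bennett_h u"
proof -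
  have "1 / (1 + u) \<noteq> 1"
    using assms by simp
  then have "ln (1 / (1 + u)) \<noteq> 1 / (1 + u) - 1"
    using assms ln_eq_minus_one[of "1 / (1 + u)"] by auto
  moreover have "ln (1 / (1 + u)) \<le> 1 / (1 + u) - 1"
    using assms by (intro ln_le_minus_one) simp
  ultimately have "- ln (1 + u) < - u / (1 + u)"
    using assms by (simp add: ln_div field_simps)
  then show ?thesis
    using assms by (simp add: bennett_h_def field_simps)
qed

section \<open>Bennett's inequality for independent samples\<close>

lemma finite_set_pmf_Pi_pmf:
  assumes "finite I" "\<And>i. i \<in> I \<Longrightarrow> finite (set_pmf (p i))"
  shows "finite (set_pmf (Pi_pmf I dflt p))"
  using assms by (subst set_Pi_pmf) (auto intro!: finite_PiE_dflt)

lemma expectation_exp_le_Bennett: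
  fixes Q :: "'a pmf" and W :: "'a \<Rightarrow> real"
  assumes "finite (set_pmf Q)" and "\<And>x. x \<in> set_pmf Q \<Longrightarrow> W x \<le> b" and "0 < b" "0 < l"
    and "measure_pmf.expectation Q W = 0"
    and "measure_pmf.expectation Q (\<lambda>x. (W x)\<^sup>2) \<le> b"
  shows "measure_pmf.expectation Q (\<lambda>x. exp (l * W x)) \<le> exp ((exp (l * b) - 1 - l * b) / b)"
proof -
  define K where "K = (exp (l * b) - 1 - l * b) / b\<^sup>2"
  have "0 \<le> K"
    unfolding K_def using exp_ge_add_one_self[of "l * b"] by (intro divide_nonneg_nonneg) (linarith, simp)
  have integrable: "integrable (measure_pmf Q) f" for f :: "'a \<Rightarrow> real"
    using assms(1) by (rule integrable_measure_pmf_finite)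
  have "measure_pmf.expectation Q (\<lambda>x. exp (l * W x))
        \<le> measure_pmf.expectation Q (\<lambda>x. 1 + l * W x + (W x)\<^sup>2 * K)"
    unfolding K_def using assms(2-4)
    by (intro integral_mono_AE integrable AE_pmfI exp_le_Bennett_quadratic) auto
  also have "\<dots> = 1 + measure_pmf.expectation Q (\<lambda>x. (W x)\<^sup>2) * K"
    using assms(5) by (simp add: integrable)
  also have "\<dots> \<le> 1 + b * K"
    using assms(6) \<open>0 \<le> K\<close> by (simp add: mult_right_mono)
  also have "\<dots> \<le> exp (b * K)"
    by (rule exp_ge_add_one_self)
  finally show ?thesis
    using assms(3) by (simp add: K_def power2_eq_square)
qed

lemma prob_Pi_pmf_sum_ge_Bennett:
  fixes Q :: "'a pmf" and W :: "'a \<Rightarrow> real" and I :: "'i set"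
  assumes "finite (set_pmf Q)" and "finite I"
    and "\<And>x. x \<in> set_pmf Q \<Longrightarrow> W x \<le> b" and "0 < b"
    and "measure_pmf.expectation Q W = 0"
    and "measure_pmf.expectation Q (\<lambda>x. (W x)\<^sup>2) \<le> b"
    and "0 < \<epsilon>"
  shows "measure_pmf.prob (Pi_pmf I dflt (\<lambda>_. Q)) {d. real (card I) * \<epsilon> \<le> (\<Sum>j\<in>I. W (d j))}
           \<le> exp (- real (card I) * bennett_h \<epsilon> / b)"
proof -
  define n where "n = real (card I)"
  define P where "P = Pi_pmf I dflt (\<lambda>_. Q)"
  \<comment> \<open>The exponent minimising the Chernoff bound.\<close>
  define l where "l = ln (1 + \<epsilon>) / b"
  have "0 < l"
    using assms(4,7) by (simp add: l_def)
  have exp_lb: "exp (l * b) = 1 + \<epsilon>"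
    using assms(4,7) by (simp add: l_def)
  have "finite (set_pmf P)"
    unfolding P_def using assms(1,2) by (intro finite_set_pmf_Pi_pmf) auto
  define u where "u d = (\<Prod>j\<in>I. exp (l * W (d j)))" for d :: "'i \<Rightarrow> 'a"
  have u_eq: "u d = exp (l * (\<Sum>j\<in>I. W (d j)))" for d
    unfolding u_def by (simp add: exp_sum[OF assms(2)] sum_distrib_left)
  have "measure_pmf.expectation P u = (\<Prod>j\<in>I. measure_pmf.expectation Q (\<lambda>x. exp (l * W x)))"
    unfolding u_def P_def
    by (rule expectation_prod_Pi_pmf[OF assms(2)]) (auto simp: integrable_measure_pmf_finite[OF assms(1)])
  also have "\<dots> \<le> (\<Prod>j\<in>I. exp ((\<epsilon> - ln (1 + \<epsilon>)) / b))"
    using expectation_exp_le_Bennett[OF assms(1,3,4) \<open>0 < l\<close> assms(5,6)] assms(4,7)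
    by (intro prod_mono conjI integral_nonneg_AE AE_pmfI) (auto simp: exp_lb l_def)
  also have "\<dots> = exp (n * (\<epsilon> - ln (1 + \<epsilon>)) / b)"
    by (simp add: n_def exp_of_nat_mult[symmetric])
  finally have expectation_u: "measure_pmf.expectation P u \<le> exp (n * (\<epsilon> - ln (1 + \<epsilon>)) / b)" .
  have "{d. n * \<epsilon> \<le> (\<Sum>j\<in>I. W (d j))} = {d \<in> space (measure_pmf P). exp (l * (n * \<epsilon>)) \<le> u d}"
    using \<open>0 < l\<close> by (auto simp: u_eq)
  then have "measure_pmf.prob P {d. n * \<epsilon> \<le> (\<Sum>j\<in>I. W (d j))}
             \<le> measure_pmf.expectation P u / exp (l * (n * \<epsilon>))"
    by (simp only:)
       (rule integral_Markov_inequality_measure[OF integrable_measure_pmf_finite[OF \<open>finite (set_pmf P)\<close>]],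
        auto simp: u_def intro!: AE_pmfI prod_nonneg)
  also have "\<dots> \<le> exp (n * (\<epsilon> - ln (1 + \<epsilon>)) / b) / exp (l * (n * \<epsilon>))"
    by (intro divide_right_mono expectation_u) simp
  also have "\<dots> = exp (- n * bennett_h \<epsilon> / b)"
    using assms(4) by (simp add: exp_diff[symmetric] l_def bennett_h_def field_simps)
  finally show ?thesis
    unfolding n_def P_def .
qed

lemma expectation_square_le_of_mean_zero:
  fixes Q :: "'a pmf" and Z :: "'a \<Rightarrow> real"
  assumes "finite (set_pmf Q)" and "\<And>x. x \<in> set_pmf Q \<Longrightarrow> - 1 \<le> Z x \<and> Z x \<le> b"
    and "measure_pmf.expectation Q Z = 0"
  shows "measure_pmf.expectation Q (\<lambda>x. (Z x)\<^sup>2) \<le> b"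
proof -
  have integrable: "integrable (measure_pmf Q) f" for f :: "'a \<Rightarrow> real"
    using assms(1) by (rule integrable_measure_pmf_finite)
  have "measure_pmf.expectation Q (\<lambda>x. (Z x)\<^sup>2) \<le> measure_pmf.expectation Q (\<lambda>x. (b - 1) * Z x + b)"
  proof (intro integral_mono_AE integrable AE_pmfI)
    fix x assume "x \<in> set_pmf Q"
    then have "0 \<le> (Z x + 1) * (b - Z x)"
      using assms(2)[of x] by (intro mult_nonneg_nonneg) auto
    then show "(Z x)\<^sup>2 \<le> (b - 1) * Z x + b"
      by (simp add: power2_eq_square algebra_simps)
  qed
  also have "\<dots> = b"
    using assms(3) by (simp add: integrable)
  finally show ?thesis .
qed

lemma prob_Pi_pmf_sample_mean_deviation_le:
  fixes Q :: "'a pmf" and Y :: "'a \<Rightarrow> real" and I :: "'i set"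
  assumes "finite (set_pmf Q)" and "finite I" "I \<noteq> {}"
    and "\<And>x. x \<in> set_pmf Q \<Longrightarrow> 0 \<le> Y x \<and> Y x \<le> (b + 1) * \<mu>"
    and "measure_pmf.expectation Q Y = \<mu>" and "0 < \<mu>" and "1 \<le> b" and "0 < \<epsilon>"
  shows "measure_pmf.prob (Pi_pmf I dflt (\<lambda>_. Q))
           {d. \<epsilon> * \<mu> \<le> \<bar>(\<Sum>j\<in>I. Y (d j)) / real (card I) - \<mu>\<bar>}
         \<le> 2 * exp (- real (card I) * bennett_h \<epsilon> / b)"
proof -
  define n where "n = real (card I)"
  have "0 < n"
    using assms(2,3) by (simp add: n_def card_gt_0_iff)
  define P where "P = Pi_pmf I dflt (\<lambda>_. Q)"
  define Z where "Z x = Y x / \<mu> - 1" for x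
  have integrable: "integrable (measure_pmf Q) f" for f :: "'a \<Rightarrow> real"
    using assms(1) by (rule integrable_measure_pmf_finite)
  have Z_bounds: "- 1 \<le> Z x \<and> Z x \<le> b" if "x \<in> set_pmf Q" for x
    using assms(4)[OF that] assms(6) by (simp add: Z_def field_simps)
  have mean_Z: "measure_pmf.expectation Q Z = 0"
    unfolding Z_def using assms(5,6) by (simp add: integrable)
  have second_moment_Z: "measure_pmf.expectation Q (\<lambda>x. (Z x)\<^sup>2) \<le> b"
    using Z_bounds mean_Z by (intro expectation_square_le_of_mean_zero[OF assms(1)]) auto
  have upper: "measure_pmf.prob P {d. n * \<epsilon> \<le> (\<Sum>j\<in>I. Z (d j))} \<le> exp (- n * bennett_h \<epsilon> / b)"
    unfolding P_def n_def using assms(7)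
    by (intro prob_Pi_pmf_sum_ge_Bennett[OF assms(1,2)] mean_Z second_moment_Z assms(8))
       (auto dest: Z_bounds)
  have lower: "measure_pmf.prob P {d. n * \<epsilon> \<le> (\<Sum>j\<in>I. - Z (d j))} \<le> exp (- n * bennett_h \<epsilon> / b)"
    unfolding P_def n_def using assms(7) mean_Z second_moment_Z
    by (intro prob_Pi_pmf_sum_ge_Bennett[OF assms(1,2)] assms(8)) (auto dest: Z_bounds)
  have sum_Z: "(\<Sum>j\<in>I. Z (d j)) = n / \<mu> * ((\<Sum>j\<in>I. Y (d j)) / n - \<mu>)" for d
    using \<open>0 < n\<close> assms(6)
    by (simp add: Z_def sum_subtractf sum_divide_distrib[symmetric] n_def field_simps)
  have "{d. \<epsilon> * \<mu> \<le> \<bar>(\<Sum>j\<in>I. Y (d j)) / n - \<mu>\<bar>}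
        \<subseteq> {d. n * \<epsilon> \<le> (\<Sum>j\<in>I. Z (d j))} \<union> {d. n * \<epsilon> \<le> (\<Sum>j\<in>I. - Z (d j))}"
  proof
    fix d assume "d \<in> {d. \<epsilon> * \<mu> \<le> \<bar>(\<Sum>j\<in>I. Y (d j)) / n - \<mu>\<bar>}"
    then have "n / \<mu> * (\<epsilon> * \<mu>) \<le> n / \<mu> * \<bar>(\<Sum>j\<in>I. Y (d j)) / n - \<mu>\<bar>"
      using \<open>0 < n\<close> assms(6) by (intro mult_left_mono) auto
    then have "n * \<epsilon> \<le> \<bar>\<Sum>j\<in>I. Z (d j)\<bar>"
      using \<open>0 < n\<close> assms(6) by (simp add: sum_Z abs_mult)
    then show "d \<in> {d. n * \<epsilon> \<le> (\<Sum>j\<in>I. Z (d j))} \<union> {d. n * \<epsilon> \<le> (\<Sum>j\<in>I. - Z (d j))}"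
      by (auto simp: sum_negf abs_if split: if_splits)
  qed
  then have "measure_pmf.prob P {d. \<epsilon> * \<mu> \<le> \<bar>(\<Sum>j\<in>I. Y (d j)) / n - \<mu>\<bar>}
             \<le> measure_pmf.prob P ({d. n * \<epsilon> \<le> (\<Sum>j\<in>I. Z (d j))} \<union> {d. n * \<epsilon> \<le> (\<Sum>j\<in>I. - Z (d j))})"
    by (rule measure_pmf.finite_measure_mono) simp
  also have "\<dots> \<le> 2 * exp (- n * bennett_h \<epsilon> / b)"
    using upper lower by (intro order.trans[OF measure_Un_le]) auto
  finally show ?thesis
    unfolding P_def n_def .
qed

lemma two_exp_Bennett_le:
  assumes "0 < b" "0 < \<epsilon>" "0 < \<delta>" "b * ln (2 / \<delta>) / bennett_h \<epsilon> \<le> real s"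
  shows "2 * exp (- real s * bennett_h \<epsilon> / b) \<le> \<delta>"
proof -
  have "ln (2 / \<delta>) \<le> real s * bennett_h \<epsilon> / b"
    using assms(1,4) bennett_h_pos[OF assms(2)] by (simp add: divide_le_eq le_divide_eq mult.commute)
  then have "2 / \<delta> \<le> exp (real s * bennett_h \<epsilon> / b)"
    using assms(3) by (metis exp_le_cancel_iff exp_ln divide_pos_pos zero_less_numeral)
  then show ?thesis
    using assms(3) by (simp add: exp_minus field_simps)
qed

section \<open>Horvitz-Thompson estimation under Bernoulli sampling\<close>

definition ht_estimate :: "'a set \<Rightarrow> ('a \<Rightarrow> real) \<Rightarrow> real \<Rightarrow> ('a \<Rightarrow> bool) \<Rightarrow> real" where
  "ht_estimate W D p f = (\<Sum>w\<in>W. if f w then D w / p else 0)"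

lemma finite_set_pmf_Pi_pmf_bernoulli:
  "finite W \<Longrightarrow> finite (set_pmf (Pi_pmf W dflt (\<lambda>_. bernoulli_pmf p)))"
  by (intro finite_set_pmf_Pi_pmf) auto

lemma expectation_Pi_pmf_bernoulli_pair:
  fixes W :: "'a set"
  assumes "finite W" "j \<in> W" "k \<in> W" "0 \<le> p" "p \<le> 1"
  shows "measure_pmf.expectation (Pi_pmf W False (\<lambda>_. bernoulli_pmf p))
           (\<lambda>f. of_bool (f j) * of_bool (f k) :: real) = (if j = k then p else p\<^sup>2)"
proof -
  define g where "g x v = (if x \<in> {j, k} then of_bool v else 1 :: real)" for x v
  have "W \<inter> {j, k} = {j, k}"
    using assms(2,3) by auto
  then have "of_bool (f j) * of_bool (f k) = (\<Prod>x\<in>W. g x (f x))" for f :: "'a \<Rightarrow> bool"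
    unfolding g_def by (subst prod.inter_restrict[OF assms(1), symmetric]) (cases "j = k"; simp)
  then have "measure_pmf.expectation (Pi_pmf W False (\<lambda>_. bernoulli_pmf p))
               (\<lambda>f. of_bool (f j) * of_bool (f k) :: real)
             = (\<Prod>x\<in>W. measure_pmf.expectation (bernoulli_pmf p) (g x))"
    by (simp only:) (rule expectation_prod_Pi_pmf[OF assms(1)],
                     auto simp: g_def intro!: integrable_measure_pmf_finite)
  also have "\<dots> = (\<Prod>x\<in>W. if x \<in> {j, k} then p else 1)"
    using assms(4,5) by (intro prod.cong) (auto simp: g_def)
  also have "\<dots> = (\<Prod>x\<in>W \<inter> {j, k}. p)"
    by (rule prod.inter_restrict[OF assms(1), symmetric])
  also have "\<dots> = p ^ card {j, k}"
    using \<open>W \<inter> {j, k} = {j, k}\<close> by simp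
  finally show ?thesis
    by (simp add: power2_eq_square)
qed

lemma ht_estimate_mean_square_error:
  fixes W :: "'a set" and D :: "'a \<Rightarrow> real"
  assumes "finite W" "0 < p" "p \<le> 1"
  shows "measure_pmf.expectation (Pi_pmf W False (\<lambda>_. bernoulli_pmf p))
           (\<lambda>f. (ht_estimate W D p f - sum D W)\<^sup>2) = (1 - p) / p * (\<Sum>w\<in>W. (D w)\<^sup>2)"
proof -
  define P where "P = Pi_pmf W False (\<lambda>_. bernoulli_pmf p)"
  have integrable: "integrable (measure_pmf P) f" for f :: "('a \<Rightarrow> bool) \<Rightarrow> real"
    unfolding P_def using assms(1)
    by (intro integrable_measure_pmf_finite finite_set_pmf_Pi_pmf_bernoulli)
  define X where "X w f = of_bool (f w) / p - 1" for w and f :: "'a \<Rightarrow> bool"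
  have covariance: "measure_pmf.expectation P (\<lambda>f. X j f * X k f) = (if j = k then 1 / p - 1 else 0)"
    if "j \<in> W" "k \<in> W" for j k
  proof -
    have mean: "measure_pmf.expectation P (\<lambda>f. of_bool (f w)) = p" if "w \<in> W" for w
    proof -
      have "(\<lambda>f. of_bool (f w)) = (\<lambda>f. of_bool (f w) * of_bool (f w) :: real)"
        by auto
      then show ?thesis
        using expectation_Pi_pmf_bernoulli_pair[OF assms(1) that that] assms(2,3)
        by (simp add: P_def)
    qed
    have "(\<lambda>f. X j f * X k f)
          = (\<lambda>f. of_bool (f j) * of_bool (f k) / p\<^sup>2 - of_bool (f j) / p - of_bool (f k) / p + 1)"
      using assms(2) by (auto simp: X_def field_simps power2_eq_square)
    then have "measure_pmf.expectation P (\<lambda>f. X j f * X k f)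
               = measure_pmf.expectation P (\<lambda>f. of_bool (f j) * of_bool (f k)) / p\<^sup>2
                 - measure_pmf.expectation P (\<lambda>f. of_bool (f j)) / p
                 - measure_pmf.expectation P (\<lambda>f. of_bool (f k)) / p + 1"
      by (simp only:) (simp add: integrable)
    also have "\<dots> = (if j = k then 1 / p - 1 else 0)"
      using expectation_Pi_pmf_bernoulli_pair[OF assms(1) that] assms(2,3) mean that
      by (simp add: P_def power2_eq_square field_simps)
    finally show ?thesis .
  qed
  have "ht_estimate W D p f - sum D W = (\<Sum>w\<in>W. D w * X w f)" for f
    unfolding ht_estimate_def X_def
    by (simp add: sum_subtractf[symmetric] right_diff_distrib) (intro sum.cong; simp)
  then have "measure_pmf.expectation P (\<lambda>f. (ht_estimate W D p f - sum D W)\<^sup>2)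
             = measure_pmf.expectation P (\<lambda>f. \<Sum>j\<in>W. \<Sum>k\<in>W. D j * D k * (X j f * X k f))"
    by (simp add: power2_eq_square sum_product algebra_simps)
  also have "\<dots> = (\<Sum>j\<in>W. \<Sum>k\<in>W. D j * D k * measure_pmf.expectation P (\<lambda>f. X j f * X k f))"
    by (simp add: integrable)
  also have "\<dots> = (\<Sum>j\<in>W. (D j)\<^sup>2 * (1 / p - 1))"
    by (intro sum.cong refl) (simp add: covariance if_distrib assms(1) power2_eq_square cong: if_cong)
  also have "\<dots> = (1 - p) / p * (\<Sum>w\<in>W. (D w)\<^sup>2)"
    using assms(2) by (simp add: sum_distrib_left field_simps)
  finally show ?thesis
    unfolding P_def .
qed

lemma prob_ht_estimate_relative_error_le:
  fixes W :: "'a set" and D :: "'a \<Rightarrow> real"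
  assumes "finite W" "0 < p" "p \<le> 1" "\<And>w. w \<in> W \<Longrightarrow> 0 \<le> D w" "0 < sum D W" "0 < \<epsilon>"
  shows "measure_pmf.prob (Pi_pmf W False (\<lambda>_. bernoulli_pmf p))
           {f. \<epsilon> * sum D W \<le> \<bar>ht_estimate W D p f - sum D W\<bar>} \<le> (1 - p) / (p * \<epsilon>\<^sup>2)"
proof -
  define P where "P = Pi_pmf W False (\<lambda>_. bernoulli_pmf p)"
  define S where "S = sum D W"
  have "(\<Sum>w\<in>W. (D w)\<^sup>2) \<le> (\<Sum>w\<in>W. D w * S)"
    unfolding power2_eq_square S_def using assms(1,4)
    by (intro sum_mono mult_left_mono member_le_sum) auto
  also have "\<dots> = S\<^sup>2"
    by (simp add: S_def power2_eq_square sum_distrib_right)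
  finally have sum_squares: "(\<Sum>w\<in>W. (D w)\<^sup>2) \<le> S\<^sup>2" .
  have "{f. \<epsilon> * S \<le> \<bar>ht_estimate W D p f - S\<bar>}
        = {f \<in> space (measure_pmf P). (\<epsilon> * S)\<^sup>2 \<le> (ht_estimate W D p f - S)\<^sup>2}"
    using assms(5,6) by (auto simp: S_def abs_le_square_iff[symmetric])
  then have "measure_pmf.prob P {f. \<epsilon> * S \<le> \<bar>ht_estimate W D p f - S\<bar>}
             \<le> measure_pmf.expectation P (\<lambda>f. (ht_estimate W D p f - S)\<^sup>2) / (\<epsilon> * S)\<^sup>2"
    unfolding P_def using assms(1,5,6)
    by (simp only:) (intro integral_Markov_inequality_measure integrable_measure_pmf_finite
                       finite_set_pmf_Pi_pmf_bernoulli AE_pmfI, auto simp: S_def)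
  also have "\<dots> = (1 - p) / p * (\<Sum>w\<in>W. (D w)\<^sup>2) / (\<epsilon> * S)\<^sup>2"
    unfolding P_def S_def using assms(1-3) by (simp add: ht_estimate_mean_square_error)
  also have "\<dots> \<le> (1 - p) / p * S\<^sup>2 / (\<epsilon> * S)\<^sup>2"
    using sum_squares assms(2,3) by (intro divide_right_mono mult_left_mono) auto
  also have "\<dots> = (1 - p) / (p * \<epsilon>\<^sup>2)"
    using assms(5) by (simp add: S_def power_mult_distrib)
  finally show ?thesis
    unfolding P_def S_def .
qed

lemma eps_delta_estimator_ht_estimate:
  fixes W :: "'a set" and D :: "'a \<Rightarrow> real"
  assumes "finite W" "\<And>w. w \<in> W \<Longrightarrow> 0 \<le> D w" "0 < sum D W"
    and "1 / (1 + \<delta> * \<epsilon>\<^sup>2) \<le> p" "p \<le> 1" "0 < \<epsilon>" "0 < \<delta>"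
  shows "eps_delta_estimator (map_pmf (ht_estimate W D p) (Pi_pmf W False (\<lambda>_. bernoulli_pmf p)))
           (sum D W) \<epsilon> \<delta>"
proof -
  have "0 < 1 + \<delta> * \<epsilon>\<^sup>2"
    using assms(7) by (simp add: add_pos_nonneg)
  then have "0 < p"
    using assms(4) by (meson order.strict_trans2 zero_less_divide_1_iff)
  have "1 \<le> p * (1 + \<delta> * \<epsilon>\<^sup>2)"
    using assms(4) \<open>0 < 1 + \<delta> * \<epsilon>\<^sup>2\<close> by (simp add: divide_le_eq mult.commute)
  then have "(1 - p) / (p * \<epsilon>\<^sup>2) \<le> \<delta>"
    using assms(6) \<open>0 < p\<close> by (simp add: divide_le_eq algebra_simps)
  then show ?thesis
    using prob_ht_estimate_relative_error_le[OF assms(1) \<open>0 < p\<close> assms(5,2,3,6)]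
    unfolding eps_delta_estimator_def by (simp add: vimage_def)
qed

section \<open>Butterfly counts and the three estimators\<close>

lemma sum_Collect_less_conj:
  "(\<Sum>x | x < (n :: nat) \<and> P x. f x) = (\<Sum>x<n. if P x then f x else 0)"
proof -
  have "{x. x < n \<and> P x} = {x \<in> {..<n}. P x}"
    by auto
  then show ?thesis
    by (simp only:) (rule sum.inter_filter, simp)
qed

lemma is_inst_first_edge_earliest:
  assumes "i \<in> {1..6}" "is_inst E \<tau> i a b c d"
  shows "ts_of E a < ts_of E b" "ts_of E a < ts_of E c" "ts_of E a < ts_of E d"
proof -
  have "i = 1 \<or> i = 2 \<or> i = 3 \<or> i = 4 \<or> i = 5 \<or> i = 6"
    using assms(1) by auto
  moreover have "sorted_wrt (<) (map (\<lambda>k. ts_of E ([a, b, c, d] ! (k - 1))) (sigma i))"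
    using assms(2) by (simp add: is_inst_def)
  ultimately show "ts_of E a < ts_of E b" "ts_of E a < ts_of E c" "ts_of E a < ts_of E d"
    by (auto simp: sigma_def)
qed

lemma C_count_eq_sum_C_edge:
  assumes "i \<in> {1..6}"
  shows "C_count E \<tau> i = (\<Sum>e<length E. C_edge E \<tau> i e)"
proof -
  define F where "F e = {S. \<exists>b c d. S = {e, b, c, d} \<and> is_inst E \<tau> i e b c d}" for e
  have "instances E \<tau> i = (\<Union>e<length E. F e)"
    unfolding instances_def F_def by (auto simp: is_inst_def)
  moreover have "finite (F e)" for e
    by (rule finite_subset[of _ "Pow (insert e {..<length E})"]) (auto simp: F_def is_inst_def)
  moreover have "F e \<inter> F e' = {}" if "e \<noteq> e'" for e e'
  proof -
    have earlier: "ts_of E e < ts_of E e'" if S: "S \<in> F e" "S \<in> F e'" "e \<noteq> e'" for S e e'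
    proof -
      obtain b c d where "S = {e, b, c, d}" "is_inst E \<tau> i e b c d"
        using S(1) unfolding F_def by blast
      moreover have "e' \<in> S"
        using S(2) unfolding F_def by blast
      ultimately show ?thesis
        using S(3) is_inst_first_edge_earliest[OF assms] by auto
    qed
    show ?thesis
    proof (rule equals0I)
      fix S assume "S \<in> F e \<inter> F e'"
      then show False
        using earlier[of S e e'] earlier[of S e' e] that by auto
    qed
  qed
  ultimately show ?thesis
    unfolding C_count_def C_edge_def F_def[symmetric] by (simp add: card_UN_disjoint)
qed

lemma length_ge_2_if_C_count_pos:
  assumes "i \<in> {1..6}" "0 < C_count E \<tau> i"
  shows "2 \<le> length E"
proof -
  obtain a b c d where inst: "is_inst E \<tau> i a b c d"
    using assms(2) card.empty unfolding C_count_def instances_def by fastforce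
  then have "a \<noteq> b"
    using is_inst_first_edge_earliest[OF assms(1)] by fastforce
  then show ?thesis
    using inst unfolding is_inst_def by linarith
qed

lemma tbcE_eq_ht_estimate:
  "tbcE E \<tau> i p
   = map_pmf (ht_estimate {..<length E} (\<lambda>e. real (C_edge E \<tau> i e)) p)
       (Pi_pmf {..<length E} False (\<lambda>_. bernoulli_pmf p))"
  unfolding tbcE_def ht_estimate_def by (simp add: sum_Collect_less_conj)

lemma eps_delta_estimator_tbcE:
  assumes "i \<in> {1..6}" "0 < C_count E \<tau> i"
    and "1 / (1 + \<delta> * \<epsilon>\<^sup>2) \<le> p" "p \<le> 1" "0 < \<epsilon>" "0 < \<delta>"
  shows "eps_delta_estimator (tbcE E \<tau> i p) (real (C_count E \<tau> i)) \<epsilon> \<delta>"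
proof -
  have "real (C_count E \<tau> i) = (\<Sum>e<length E. real (C_edge E \<tau> i e))"
    by (simp add: C_count_eq_sum_C_edge[OF assms(1)])
  then show ?thesis
    unfolding tbcE_eq_ht_estimate using assms(2-6)
    by (simp only:) (intro eps_delta_estimator_ht_estimate, auto)
qed

lemma tbcN_eq_ht_estimate:
  assumes "finite W" "\<And>e. e < length E \<Longrightarrow> proj e \<in> W"
  shows "tbcN W proj E \<tau> i p
         = map_pmf (ht_estimate W (\<lambda>w. \<Sum>e | e < length E \<and> proj e = w. real (C_edge E \<tau> i e)) p)
             (Pi_pmf W False (\<lambda>_. bernoulli_pmf p))"
  unfolding tbcN_def
proof (intro map_pmf_cong refl)
  fix f :: "'a \<Rightarrow> bool"
  define Ce where "Ce e = real (C_edge E \<tau> i e)" for e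
  have img: "proj ` {..<length E} \<subseteq> W"
    using assms(2) by auto
  have "{e. e < length E \<and> proj e \<in> W \<and> f (proj e)} = {e \<in> {..<length E}. f (proj e)}"
    using assms(2) by auto
  then have "(\<Sum>e | e < length E \<and> proj e \<in> W \<and> f (proj e). Ce e / p)
             = (\<Sum>e<length E. if f (proj e) then Ce e / p else 0)"
    by (simp only:) (rule sum.inter_filter, simp)
  also have "\<dots> = (\<Sum>w\<in>W. \<Sum>e | e < length E \<and> proj e = w. if f (proj e) then Ce e / p else 0)"
    by (subst sum.group[OF _ assms(1) img, symmetric]) (simp_all add: conj_commute)
  also have "\<dots> = ht_estimate W (\<lambda>w. \<Sum>e | e < length E \<and> proj e = w. Ce e) p f"
    unfolding ht_estimate_def by (intro sum.cong refl) (auto simp: sum_divide_distrib)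
  finally show "(\<Sum>e | e < length E \<and> proj e \<in> W \<and> f (proj e). Ce e / p)
                = ht_estimate W (\<lambda>w. \<Sum>e | e < length E \<and> proj e = w. Ce e) p f" .
qed

lemma eps_delta_estimator_tbcN:
  assumes "finite W" "\<And>e. e < length E \<Longrightarrow> proj e \<in> W"
    and "i \<in> {1..6}" "0 < C_count E \<tau> i"
    and "1 / (1 + \<delta> * \<epsilon>\<^sup>2) \<le> p" "p \<le> 1" "0 < \<epsilon>" "0 < \<delta>"
  shows "eps_delta_estimator (tbcN W proj E \<tau> i p) (real (C_count E \<tau> i)) \<epsilon> \<delta>"
proof -
  define D where "D w = (\<Sum>e | e < length E \<and> proj e = w. real (C_edge E \<tau> i e))" for w
  have "real (C_count E \<tau> i) = (\<Sum>e<length E. real (C_edge E \<tau> i e))"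
    by (simp add: C_count_eq_sum_C_edge[OF assms(3)])
  also have "\<dots> = sum D W"
    unfolding D_def using assms(1,2)
    by (subst sum.group[OF _ assms(1), symmetric]) (auto simp: conj_commute)
  finally have C_eq: "real (C_count E \<tau> i) = sum D W" .
  have "tbcN W proj E \<tau> i p = map_pmf (ht_estimate W D p) (Pi_pmf W False (\<lambda>_. bernoulli_pmf p))"
    unfolding D_def by (rule tbcN_eq_ht_estimate[OF assms(1,2)])
  then show ?thesis
    unfolding C_eq using assms(4-8) C_eq
    by (simp only:) (intro eps_delta_estimator_ht_estimate[OF assms(1)], auto simp: D_def intro!: sum_nonneg)
qed

(* The contribution of one draw k of TBC-I, rescaled by s / m.  An edge e lies in the window
   [t_k, t_k + c tau] of exactly m'_e draws k, hence the division by m'_e. *)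
definition window_weight :: "('v \<times> 'v \<times> real) list \<Rightarrow> real \<Rightarrow> nat \<Rightarrow> real \<Rightarrow> nat \<Rightarrow> real" where
  "window_weight E \<tau> i c k =
     (\<Sum>e | e < length E \<and> ts_of E k \<le> ts_of E e \<and> ts_of E e \<le> ts_of E k + c * \<tau>.
        real (C_edge E \<tau> i e) / real (m_prime E \<tau> c e))"

lemma tbcI_eq_window_weight:
  "tbcI E \<tau> i c s
   = map_pmf (\<lambda>d. real (length E) / real s * (\<Sum>j<s. window_weight E \<tau> i c (d j)))
       (Pi_pmf {..<s} 0 (\<lambda>_. pmf_of_set {..<length E}))"
  unfolding tbcI_def window_weight_def by (simp add: sum_distrib_left)

lemma m_prime_pos:
  assumes "e < length E" "0 \<le> c * \<tau>"
  shows "0 < m_prime E \<tau> c e"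
  unfolding m_prime_def using assms by (auto simp: card_gt_0_iff intro!: exI[of _ e])

lemma sum_window_weight_eq_C_count:
  assumes "i \<in> {1..6}" "0 \<le> c * \<tau>"
  shows "(\<Sum>k<length E. window_weight E \<tau> i c k) = real (C_count E \<tau> i)"
proof -
  define w where "w e = real (C_edge E \<tau> i e) / real (m_prime E \<tau> c e)" for e
  define window where "window k e \<longleftrightarrow> ts_of E k \<le> ts_of E e \<and> ts_of E e \<le> ts_of E k + c * \<tau>" for k e
  have "(\<Sum>k<length E. window_weight E \<tau> i c k) = (\<Sum>k<length E. \<Sum>e<length E. if window k e then w e else 0)"
    unfolding window_weight_def w_def window_def by (simp only: sum_Collect_less_conj)
  also have "\<dots> = (\<Sum>e<length E. \<Sum>k<length E. if window k e then w e else 0)"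
    by (rule sum.swap)
  also have "\<dots> = (\<Sum>e<length E. real (m_prime E \<tau> c e) * w e)"
  proof (intro sum.cong refl)
    fix e
    have "{k. k < length E \<and> window k e}
          = {e'. e' < length E \<and> ts_of E e - c * \<tau> \<le> ts_of E e' \<and> ts_of E e' \<le> ts_of E e}"
      unfolding window_def by auto
    then show "(\<Sum>k<length E. if window k e then w e else 0) = real (m_prime E \<tau> c e) * w e"
      unfolding m_prime_def by (simp flip: sum_Collect_less_conj)
  qed
  also have "\<dots> = (\<Sum>e<length E. real (C_edge E \<tau> i e))"
    using m_prime_pos[OF _ assms(2), of _ E] by (intro sum.cong refl) (simp add: w_def)
  finally show ?thesis
    by (simp add: C_count_eq_sum_C_edge[OF assms(1)])
qed

lemma window_weight_le_C_count:
  assumes "i \<in> {1..6}" "0 \<le> c * \<tau>"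
  shows "window_weight E \<tau> i c k \<le> real (C_count E \<tau> i)"
proof -
  have "window_weight E \<tau> i c k \<le> (\<Sum>e<length E. real (C_edge E \<tau> i e) / real (m_prime E \<tau> c e))"
    unfolding window_weight_def by (intro sum_mono2) auto
  also have "\<dots> \<le> (\<Sum>e<length E. real (C_edge E \<tau> i e))"
  proof (intro sum_mono)
    fix e assume "e \<in> {..<length E}"
    then have "1 \<le> real (m_prime E \<tau> c e)"
      using m_prime_pos[OF _ assms(2), of e E] by (simp add: Suc_le_eq)
    then have "real (C_edge E \<tau> i e) / real (m_prime E \<tau> c e) \<le> real (C_edge E \<tau> i e) / 1"
      by (intro divide_left_mono) auto
    then show "real (C_edge E \<tau> i e) / real (m_prime E \<tau> c e) \<le> real (C_edge E \<tau> i e)"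
      by simp
  qed
  finally show ?thesis
    by (simp add: C_count_eq_sum_C_edge[OF assms(1)])
qed

lemma eps_delta_estimator_tbcI:
  assumes "i \<in> {1..6}" "0 < C_count E \<tau> i" "0 \<le> c * \<tau>" "0 < s" "0 < \<epsilon>" "0 < \<delta>"
    and "(real (length E) - 1) * ln (2 / \<delta>) / bennett_h \<epsilon> \<le> real s"
  shows "eps_delta_estimator (tbcI E \<tau> i c s) (real (C_count E \<tau> i)) \<epsilon> \<delta>"
proof -
  define m where "m = real (length E)"
  define C where "C = real (C_count E \<tau> i)"
  define Q where "Q = pmf_of_set {..<length E}"
  define Y where "Y = window_weight E \<tau> i c"
  have "2 \<le> length E"
    using length_ge_2_if_C_count_pos[OF assms(1,2)] .
  then have "2 \<le> m" "0 < C"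
    using assms(2) by (simp_all add: m_def C_def)
  have set_Q: "set_pmf Q = {..<length E}"
    unfolding Q_def using \<open>2 \<le> length E\<close> by (intro set_pmf_of_set) (auto simp: lessThan_empty_iff)
  have "measure_pmf.expectation Q Y = C / m"
    unfolding Q_def Y_def C_def m_def
    using \<open>2 \<le> length E\<close> sum_window_weight_eq_C_count[OF assms(1) assms(3), of E]
    by (subst integral_pmf_of_set) (auto simp: lessThan_empty_iff)
  moreover have "0 \<le> Y k \<and> Y k \<le> (m - 1 + 1) * (C / m)" for k
    using window_weight_le_C_count[OF assms(1) assms(3)] \<open>2 \<le> m\<close>
    by (auto simp: Y_def C_def window_weight_def intro!: sum_nonneg)
  ultimately have deviation:
    "measure_pmf.prob (Pi_pmf {..<s} 0 (\<lambda>_. Q)) {d. \<epsilon> * (C / m) \<le> \<bar>(\<Sum>j<s. Y (d j)) / real s - C / m\<bar>}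
     \<le> 2 * exp (- real s * bennett_h \<epsilon> / (m - 1))"
    using prob_Pi_pmf_sample_mean_deviation_le[of Q "{..<s}" Y "m - 1" "C / m" \<epsilon> 0]
      set_Q assms(4,5) \<open>0 < C\<close> \<open>2 \<le> m\<close> by (simp add: lessThan_empty_iff)
  have "2 * exp (- real s * bennett_h \<epsilon> / (m - 1)) \<le> \<delta>"
    using \<open>2 \<le> m\<close> assms(5-7) by (intro two_exp_Bennett_le) (simp_all add: m_def)
  have event_eq: "(\<epsilon> * C \<le> \<bar>m / real s * (\<Sum>j<s. Y (d j)) - C\<bar>)
                  \<longleftrightarrow> (\<epsilon> * (C / m) \<le> \<bar>(\<Sum>j<s. Y (d j)) / real s - C / m\<bar>)" for d
  proof -
    have "m / real s * (\<Sum>j<s. Y (d j)) - C = m * ((\<Sum>j<s. Y (d j)) / real s - C / m)"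
      using \<open>2 \<le> m\<close> by (simp add: field_simps)
    then show ?thesis
      using \<open>2 \<le> m\<close> by (simp add: abs_mult field_simps)
  qed
  have "tbcI E \<tau> i c s = map_pmf (\<lambda>d. m / real s * (\<Sum>j<s. Y (d j))) (Pi_pmf {..<s} 0 (\<lambda>_. Q))"
    unfolding m_def Y_def Q_def by (rule tbcI_eq_window_weight)
  then have "measure_pmf.prob (tbcI E \<tau> i c s) {x. \<epsilon> * C \<le> \<bar>x - C\<bar>}
             = measure_pmf.prob (Pi_pmf {..<s} 0 (\<lambda>_. Q))
                 {d. \<epsilon> * (C / m) \<le> \<bar>(\<Sum>j<s. Y (d j)) / real s - C / m\<bar>}"
    by (simp only: measure_map_pmf vimage_def mem_Collect_eq event_eq)
  then show ?thesis
    unfolding eps_delta_estimator_def C_def[symmetric]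
    using deviation \<open>2 * exp (- real s * bennett_h \<epsilon> / (m - 1)) \<le> \<delta>\<close> by linarith
qed

theorem theorem4p3:
  fixes U L :: "'v set" and E :: "('v \<times> 'v \<times> real) list"
    and \<tau> \<epsilon> \<delta> :: real and i :: nat
  assumes "temporal_bipartite_graph U L E"
    and "\<tau> > 0"
    and "i \<in> {1..6}"
    and "0 < \<epsilon>" and "\<epsilon> < 1" and "0 < \<delta>" and "\<delta> < 1"
    and "C_count E \<tau> i > 0"
  shows "(\<forall>p. 1 / (1 + \<delta> * \<epsilon>^2) \<le> p \<and> p \<le> 1 \<longrightarrow>
            eps_delta_estimator (tbcE E \<tau> i p) (real (C_count E \<tau> i)) \<epsilon> \<delta> \<and>
            eps_delta_estimator (tbcN_U U E \<tau> i p) (real (C_count E \<tau> i)) \<epsilon> \<delta> \<and>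
            eps_delta_estimator (tbcN_L L E \<tau> i p) (real (C_count E \<tau> i)) \<epsilon> \<delta>) \<and>
         (\<forall>c s. c > 0 \<and> s > 0 \<and>
            real s \<ge> (real (length E) - 1) * ln (2 / \<delta>) / ((1 + \<epsilon>) * ln (1 + \<epsilon>) - \<epsilon>) \<longrightarrow>
            eps_delta_estimator (tbcI E \<tau> i c s) (real (C_count E \<tau> i)) \<epsilon> \<delta>)"
proof (intro conjI allI impI; (elim conjE)?)
  have "finite U" "finite L" and endpoints: "\<And>x. x \<in> set E \<Longrightarrow> fst x \<in> U \<and> fst (snd x) \<in> L"
    using assms(1) unfolding temporal_bipartite_graph_def by auto
  have up_in_U: "up_of E e \<in> U" and lo_in_L: "lo_of E e \<in> L" if "e < length E" for e
    using endpoints[OF nth_mem[OF that]] by (simp_all add: up_of_def lo_of_def)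
  fix p assume "1 / (1 + \<delta> * \<epsilon>^2) \<le> p" "p \<le> 1"
  then show "eps_delta_estimator (tbcE E \<tau> i p) (real (C_count E \<tau> i)) \<epsilon> \<delta>"
    and "eps_delta_estimator (tbcN_U U E \<tau> i p) (real (C_count E \<tau> i)) \<epsilon> \<delta>"
    and "eps_delta_estimator (tbcN_L L E \<tau> i p) (real (C_count E \<tau> i)) \<epsilon> \<delta>"
    unfolding tbcN_U_def tbcN_L_def
    using \<open>finite U\<close> \<open>finite L\<close> up_in_U lo_in_L assms(3,4,6,8)
    by (auto intro!: eps_delta_estimator_tbcE eps_delta_estimator_tbcN)
next
  fix c :: real and s :: nat
  assume "c > 0" "s > 0"
    and "real s \<ge> (real (length E) - 1) * ln (2 / \<delta>) / ((1 + \<epsilon>) * ln (1 + \<epsilon>) - \<epsilon>)"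
  then show "eps_delta_estimator (tbcI E \<tau> i c s) (real (C_count E \<tau> i)) \<epsilon> \<delta>"
    using assms(2-4,6,8) by (intro eps_delta_estimator_tbcI) (simp_all add: bennett_h_def)
qed

end
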